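(* For every positive integer $n$, the set $\overline{\mathcal{H}}_{n}=\{\gamma\in\mathcal{H}_{n}\mid \pi(\gamma)\in\mathcal{H}_{n-1}\}$ is not empty.
   Context: For a positive integer $n$ and $\gamma=(\gamma_1,\ldots,\gamma_n)\in\mathbb{R}^n$, let $P_\gamma(s)=s^n+\sum_{k=1}^{n}\gamma_k s^{n-k}$. A polynomial is called Hurwitz if all its roots have strictly negative real part. Let $\mathcal{H}_n=\{\gamma\in\mathbb{R}^n\mid P_\gamma \text{ is Hurwitz}\}$. Let $\pi:\mathbb{R}^n\to\mathbb{R}^{n-1}$ be the projection $\pi(\gamma)=(\gamma_1,\ldots,\gamma_{n-1})$, so that $P_{\pi(\gamma)}(s)=s^{n-1}+\sum_{k=1}^{n-1}\gamma_k s^{n-1-k}$. (For $n=1$, $\mathbb{R}^0$ is a point, $P_{\pi(\gamma)}=1$ has no roots and is regarded as Hurwitz, so $\mathcal{H}_0=\mathbb{R}^0$.) *)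

theory Defs
  imports "HOL-Computational_Algebra.Polynomial" Complex_Main
begin

text \<open>A coefficient vector gamma = (gamma_1,...,gamma_n) in R^n is represented as a real list
  of length n, with gamma_k = gs ! (k - 1).\<close>

definition P_gamma :: "real list \<Rightarrow> real poly" where
  "P_gamma gs = monom 1 (length gs) +
     (\<Sum>k\<in>{1..length gs}. monom (gs ! (k - 1)) (length gs - k))"

definition hurwitz :: "real poly \<Rightarrow> bool" where
  "hurwitz p \<longleftrightarrow> (\<forall>z::complex. poly (map_poly complex_of_real p) z = 0 \<longrightarrow> Re z < 0)"

definition Hurwitz_set :: "nat \<Rightarrow> real list set" where
  "Hurwitz_set n = {gs. length gs = n \<and> hurwitz (P_gamma gs)}"

definition proj :: "real list \<Rightarrow> real list" where
  "proj gs = take (length gs - 1) gs"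

end

theory Submission
  imports Defs
begin

text \<open>The binomial coefficients \<open>\<gamma>\<^sub>k = C(n, k)\<close> give \<open>P\<^sub>\<gamma>(s) = (s + 1)\<^sup>n\<close>, which is Hurwitz.
  Dropping the last coefficient \<open>\<gamma>\<^sub>n = 1\<close> leaves the polynomial \<open>Q\<close> with
  \<open>s Q(s) + 1 = (s + 1)\<^sup>n\<close>; a root \<open>z\<close> of \<open>Q\<close> therefore satisfies \<open>|z + 1| = 1\<close>, and
  \<open>z \<noteq> 0\<close> because \<open>Q(0) = n\<close>. The only point of the circle \<open>|z + 1| = 1\<close> not in the
  open left half-plane is \<open>0\<close>, so \<open>Q\<close> is Hurwitz as well.\<close>

lemma coeff_P_gamma:
  "coeff (P_gamma gs) i =
     (if i = length gs then 1 else if i < length gs then gs ! (length gs - Suc i) else 0)"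
proof -
  let ?n = "length gs"
  have "(\<Sum>k\<in>{1..?n}. coeff (monom (gs ! (k - 1)) (?n - k)) i) =
        (\<Sum>k\<in>{1..?n}. if k = ?n - i \<and> i < ?n then gs ! (k - 1) else 0)"
    by (intro sum.cong) auto
  also have "\<dots> = (if i < ?n then gs ! (?n - Suc i) else 0)"
    by (auto simp: Suc_diff_Suc)
  finally show ?thesis
    by (simp add: P_gamma_def coeff_sum)
qed

lemma P_gamma_snoc: "P_gamma (gs @ [c]) = pCons c (P_gamma gs)"
  by (rule poly_eqI) (auto simp: coeff_P_gamma coeff_pCons nth_append split: nat.split)

lemma map_poly_of_real_linear_power:
  "map_poly of_real ([:a, b:] ^ n) =
     ([:of_real a, of_real b:] ^ n :: 'a :: {real_algebra_1, comm_semiring_1} poly)"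
proof (rule poly_eqI)
  fix i
  show "coeff (map_poly of_real ([:a, b:] ^ n)) i =
        coeff ([:of_real a, of_real b:] ^ n :: 'a poly) i"
  proof (cases "i \<le> n")
    case True
    then show ?thesis by (simp add: coeff_map_poly coeff_linear_poly_power)
  next
    case False
    then have "degree ([:a, b:] ^ n) < i" "degree ([:of_real a, of_real b:] ^ n :: 'a poly) < i"
      using degree_power_le[of "[:a, b:]" n]
        degree_power_le[of "[:of_real a, of_real b:] :: 'a poly" n]
      by (auto split: if_splits)
    then show ?thesis by (simp add: coeff_map_poly coeff_eq_0)
  qed
qed

definition binomial_coeffs :: "nat \<Rightarrow> real list" where
  "binomial_coeffs n = map (\<lambda>k. real (n choose Suc k)) [0..<n]"

lemma P_gamma_binomial_coeffs: "P_gamma (binomial_coeffs n) = [:1, 1:] ^ n"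
proof (rule poly_eqI)
  fix i
  show "coeff (P_gamma (binomial_coeffs n)) i = coeff ([:1, 1:] ^ n) i"
  proof (cases "i \<le> n")
    case True
    then show ?thesis
      by (auto simp: coeff_P_gamma binomial_coeffs_def coeff_linear_poly_power
          Suc_diff_Suc binomial_symmetric[of i n])
  next
    case False
    then show ?thesis
      using degree_power_le[of "[:1, 1:] :: real poly" n]
      by (simp add: coeff_P_gamma binomial_coeffs_def coeff_eq_0)
  qed
qed

lemma hurwitz_linear_power: "hurwitz ([:1, 1:] ^ n)"
  by (auto simp: hurwitz_def map_poly_of_real_linear_power add_eq_0_iff)

lemma Re_neg_if_norm_add_one_eq_one:
  fixes z :: complex
  assumes "cmod (z + 1) = 1" "z \<noteq> 0"
  shows "Re z < 0"
proof -
  have "(Re z + 1)\<^sup>2 + (Im z)\<^sup>2 = 1"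
    using assms(1) cmod_power2[of "z + 1"] by simp
  then have "2 * Re z = - ((Re z)\<^sup>2 + (Im z)\<^sup>2)"
    by (simp add: power2_eq_square algebra_simps)
  moreover have "(Re z)\<^sup>2 + (Im z)\<^sup>2 > 0"
    using assms(2) by (simp add: complex_eq_iff sum_power2_gt_zero_iff)
  ultimately show ?thesis by simp
qed

lemma hurwitz_pCons_one_linear_power:
  assumes q: "pCons 1 q = [:1, 1:] ^ n" and "n \<ge> 1"
  shows "hurwitz q"
  unfolding hurwitz_def
proof (intro allI impI)
  fix z :: complex
  let ?q = "map_poly complex_of_real q"
  assume root: "poly ?q z = 0"
  have shifted: "pCons 1 ?q = [:1, 1:] ^ n"
    using arg_cong[OF q, of "map_poly complex_of_real"]
    by (simp add: map_poly_pCons map_poly_of_real_linear_power)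
  have "(1 + z) ^ n = 1"
    using arg_cong[OF shifted, of "\<lambda>p. poly p z"] root by simp
  then have "cmod (z + 1) ^ n = 1 ^ n"
    by (simp add: add.commute flip: norm_power)
  then have "cmod (z + 1) = 1"
    using power_eq_imp_eq_base[of "cmod (z + 1)" n 1] \<open>n \<ge> 1\<close> by simp
  moreover have "poly ?q 0 = of_nat n"
    using arg_cong[OF shifted, of "\<lambda>p. coeff p 1"] \<open>n \<ge> 1\<close>
    by (simp add: poly_0_coeff_0 coeff_linear_poly_power)
  then have "z \<noteq> 0"
    using root \<open>n \<ge> 1\<close> by auto
  ultimately show "Re z < 0"
    by (rule Re_neg_if_norm_add_one_eq_one)
qed

lemma binomial_coeffs_eq_proj_snoc:
  assumes "n \<ge> 1"
  shows "binomial_coeffs n = proj (binomial_coeffs n) @ [1]"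
  using assms by (cases n) (simp_all add: binomial_coeffs_def proj_def)

theorem lemma1:
  fixes n :: nat
  assumes "n \<ge> 1"
  shows "{gs \<in> Hurwitz_set n. proj gs \<in> Hurwitz_set (n - 1)} \<noteq> {}"
proof -
  define gs where "gs = binomial_coeffs n"
  have "pCons 1 (P_gamma (proj gs)) = [:1, 1:] ^ n"
    using binomial_coeffs_eq_proj_snoc[OF assms]
    by (metis P_gamma_snoc P_gamma_binomial_coeffs gs_def)
  then have "hurwitz (P_gamma (proj gs))"
    using assms by (rule hurwitz_pCons_one_linear_power)
  moreover have "hurwitz (P_gamma gs)"
    by (simp add: gs_def P_gamma_binomial_coeffs hurwitz_linear_power)
  moreover have "length gs = n"
    by (simp add: gs_def binomial_coeffs_def)
  ultimately have "gs \<in> {gs \<in> Hurwitz_set n. proj gs \<in> Hurwitz_set (n - 1)}"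
    by (simp add: Hurwitz_set_def proj_def)
  then show ?thesis by blast
qed

end
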